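(* If $X$ is a non-scattered Tychonoff space, then its Stone–Čech compactification $\beta X$ is not a $\Delta$-space.
   Context: A space is scattered if every nonempty subset has a point isolated in that subset. A topological space $X$ is a $\Delta$-space if for every decreasing sequence $\{D_n:n\in\omega\}$ of subsets of $X$ with $\bigcap_n D_n=\emptyset$ there is a decreasing sequence $\{V_n:n\in\omega\}$ of open subsets of $X$ with $D_n\subseteq V_n$ for all $n$ and $\bigcap_n V_n=\emptyset$. *)

theory Defs
  imports "HOL-Analysis.Analysis"
begin

definition tychonoff_space :: "'a topology \<Rightarrow> bool" where
  "tychonoff_space X \<longleftrightarrow> completely_regular_space X \<and> Hausdorff_space X"

definition scattered_space :: "'a topology \<Rightarrow> bool" where
  "scattered_space X \<longleftrightarrow>
     (\<forall>S. S \<subseteq> topspace X \<and> S \<noteq> {} \<longrightarrow>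
        (\<exists>x\<in>S. \<exists>U. openin X U \<and> U \<inter> S = {x}))"

definition delta_space :: "'a topology \<Rightarrow> bool" where
  "delta_space X \<longleftrightarrow>
     (\<forall>D :: nat \<Rightarrow> 'a set.
        (\<forall>n. D n \<subseteq> topspace X) \<and> (\<forall>n. D (Suc n) \<subseteq> D n) \<and> (\<Inter>n. D n) = {} \<longrightarrow>
        (\<exists>V :: nat \<Rightarrow> 'a set. (\<forall>n. openin X (V n)) \<and> (\<forall>n. V (Suc n) \<subseteq> V n) \<and>
            (\<forall>n. D n \<subseteq> V n) \<and> (\<Inter>n. V n) = {}))"

definition stone_cech_compactification :: "'a topology \<Rightarrow> 'b topology \<Rightarrow> ('a \<Rightarrow> 'b) \<Rightarrow> bool" where
  "stone_cech_compactification X Y e \<longleftrightarrow>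
     compact_space Y \<and> Hausdorff_space Y \<and>
     embedding_map X Y e \<and> Y closure_of (e ` topspace X) = topspace Y \<and>
     (\<forall>f. continuous_map X euclideanreal f \<and> bounded (f ` topspace X) \<longrightarrow>
        (\<exists>g. continuous_map Y euclideanreal g \<and> (\<forall>x\<in>topspace X. g (e x) = f x)))"

end

theory Submission
  imports Defs
begin

text \<open>A non-scattered space contains a nonempty set without isolated points, and its image under
  the embedding into \<open>\<beta>X\<close> is again such a set; only compactness and the Hausdorff property of
  \<open>\<beta>X\<close> are used.  In a compact Hausdorff space such
  a set yields a Cantor scheme: closed nonempty sets \<open>F s\<close> indexed by finite binary words, each
  splitting into two disjoint closed subsets.  Every infinite branch \<open>b\<close> meets the scheme in a
  nonempty closed set \<open>F\<^sub>b\<close>, and distinct branches give disjoint sets.  Let \<open>D n\<close> be the union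
  of the \<open>F\<^sub>b\<close> over the finitely supported branches having a \<open>True\<close> beyond \<open>n\<close>; these sets
  decrease to the empty set.  If open \<open>V n \<supseteq> D n\<close> existed, compactness would let us extend any
  finite word to a longer one whose cell lies in \<open>V n\<close>; iterating this for \<open>n = 0, 1, \<dots>\<close>
  produces a branch \<open>c\<close> with \<open>F\<^sub>c \<subseteq> \<Inter>n. V n\<close>, so the \<open>V n\<close> cannot have empty intersection.\<close>

definition dense_in_itself :: "'a topology \<Rightarrow> 'a set \<Rightarrow> bool" where
  "dense_in_itself X S \<longleftrightarrow> S \<subseteq> topspace X \<and> (\<forall>x\<in>S. \<forall>U. openin X U \<longrightarrow> U \<inter> S \<noteq> {x})"

definition cantor_scheme :: "'a topology \<Rightarrow> (bool list \<Rightarrow> 'a set) \<Rightarrow> bool" where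
  "cantor_scheme X F \<longleftrightarrow>
     (\<forall>s. closedin X (F s) \<and> F s \<noteq> {} \<and> (\<forall>i. F (s @ [i]) \<subseteq> F s) \<and>
          disjnt (F (s @ [True])) (F (s @ [False])))"

definition cantor_branch :: "(bool list \<Rightarrow> 'a set) \<Rightarrow> (nat \<Rightarrow> bool) \<Rightarrow> 'a set" where
  "cantor_branch F b = (\<Inter>k. F (map b [0..<k]))"

lemma not_scattered_space_iff_dense_in_itself:
  "\<not> scattered_space X \<longleftrightarrow> (\<exists>S. S \<noteq> {} \<and> dense_in_itself X S)"
  unfolding scattered_space_def dense_in_itself_def by (simp add: conj_ac)

lemma dense_in_itself_continuous_injective_image:
  assumes f: "continuous_map X Y f" "inj_on f (topspace X)" and S: "dense_in_itself X S"
  shows "dense_in_itself Y (f ` S)"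
  unfolding dense_in_itself_def
proof (intro conjI ballI allI impI)
  have "S \<subseteq> topspace X" using S by (simp add: dense_in_itself_def)
  then show "f ` S \<subseteq> topspace Y"
    using continuous_map_image_subset_topspace[OF f(1)] by blast
  fix y W assume "y \<in> f ` S" "openin Y W"
  then obtain x where x: "x \<in> S" "y = f x" by blast
  have "openin X {z \<in> topspace X. f z \<in> W}"
    using f(1) \<open>openin Y W\<close> by (rule openin_continuous_map_preimage)
  then have "{z \<in> topspace X. f z \<in> W} \<inter> S \<noteq> {x}"
    using S x by (simp add: dense_in_itself_def)
  moreover have "{z \<in> topspace X. f z \<in> W} \<inter> S = {x}" if W: "W \<inter> f ` S = {y}"
  proof (intro equalityI subsetI)
    fix z assume "z \<in> {z \<in> topspace X. f z \<in> W} \<inter> S"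
    then have "z \<in> S" "f z \<in> W" by auto
    then have "f z = f x" using W x by blast
    then show "z \<in> {x}" using inj_onD[OF f(2)] \<open>z \<in> S\<close> x(1) \<open>S \<subseteq> topspace X\<close> by blast
  qed (use W x \<open>S \<subseteq> topspace X\<close> in blast)
  ultimately show "W \<inter> f ` S \<noteq> {y}" by blast
qed

lemma regular_space_open_closure_of_subset:
  assumes "regular_space X" "openin X U" "x \<in> U"
  obtains W where "openin X W" "x \<in> W" "X closure_of W \<subseteq> U"
proof -
  have "closedin X (topspace X - U)" "x \<in> topspace X - (topspace X - U)"
    using assms openin_subset by (auto simp: closedin_diff)
  then obtain W where "openin X W" "x \<in> W" "disjnt (topspace X - U) (X closure_of W)"
    using assms(1) unfolding regular_space by blast
  moreover have "X closure_of W \<subseteq> U"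
    using \<open>disjnt (topspace X - U) (X closure_of W)\<close> closure_of_subset_topspace[of X W]
    by (auto simp: disjnt_def)
  ultimately show thesis using that by blast
qed

lemma dense_in_itself_split:
  assumes X: "regular_space X" "Hausdorff_space X" and S: "dense_in_itself X S"
    and U: "openin X U" "U \<inter> S \<noteq> {}"
  obtains U0 U1 where "openin X U0" "openin X U1" "U0 \<inter> S \<noteq> {}" "U1 \<inter> S \<noteq> {}"
    "X closure_of U0 \<subseteq> U" "X closure_of U1 \<subseteq> U" "disjnt (X closure_of U0) (X closure_of U1)"
proof -
  obtain x where x: "x \<in> U" "x \<in> S" using U by blast
  have "U \<inter> S \<noteq> {x}" using S x U by (simp add: dense_in_itself_def)
  then obtain y where y: "y \<in> U" "y \<in> S" "y \<noteq> x" using x by blast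
  have "x \<in> topspace X" "y \<in> topspace X" using x y U openin_subset by auto
  then obtain Ox Oy where O: "openin X Ox" "openin X Oy" "x \<in> Ox" "y \<in> Oy" "disjnt Ox Oy"
    using X(2) y(3) unfolding Hausdorff_space_def by metis
  obtain Wx where Wx: "openin X Wx" "x \<in> Wx" "X closure_of Wx \<subseteq> U \<inter> Ox"
    using regular_space_open_closure_of_subset[OF X(1), of "U \<inter> Ox" x] O U x by blast
  obtain Wy where Wy: "openin X Wy" "y \<in> Wy" "X closure_of Wy \<subseteq> U \<inter> Oy"
    using regular_space_open_closure_of_subset[OF X(1), of "U \<inter> Oy" y] O U y by blast
  show thesis
  proof (rule that[of Wx Wy])
    show "disjnt (X closure_of Wx) (X closure_of Wy)"
      using Wx(3) Wy(3) O(5) by (meson disjnt_subset1 disjnt_subset2 le_infE)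
  qed (use Wx Wy x y in auto)
qed

lemma dense_in_itself_imp_cantor_scheme:
  assumes X: "regular_space X" "Hausdorff_space X" and S: "S \<noteq> {}" "dense_in_itself X S"
  obtains F where "cantor_scheme X F"
proof -
  define P where "P U \<longleftrightarrow> openin X U \<and> U \<inter> S \<noteq> {}" for U
  define splits where "splits U V \<longleftrightarrow> (\<forall>i. P (V i) \<and> X closure_of V i \<subseteq> U) \<and>
      disjnt (X closure_of V True) (X closure_of V False)" for U and V :: "bool \<Rightarrow> 'a set"
  have "\<exists>V. P U \<longrightarrow> splits U V" for U
  proof (cases "P U")
    case True
    then obtain U0 U1 where "openin X U0" "openin X U1" "U0 \<inter> S \<noteq> {}" "U1 \<inter> S \<noteq> {}"
      "X closure_of U0 \<subseteq> U" "X closure_of U1 \<subseteq> U" "disjnt (X closure_of U0) (X closure_of U1)"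
      using dense_in_itself_split[OF X S(2), of U] unfolding P_def by blast
    then have "splits U (\<lambda>i. if i then U0 else U1)"
      by (simp add: splits_def P_def all_bool_eq)
    then show ?thesis by blast
  qed simp
  then obtain child where child: "\<And>U. P U \<Longrightarrow> splits U (child U)"
    by metis
  define T where "T s = foldl child (topspace X) s" for s
  have P_T: "P (T s)" for s
  proof (induction s rule: rev_induct)
    case Nil
    show ?case using S by (simp add: T_def P_def dense_in_itself_def Int_absorb1)
  next
    case (snoc i s)
    then show ?case using child[of "T s"] by (simp add: T_def splits_def)
  qed
  have T_sub: "T s \<subseteq> X closure_of T s" for s
    using P_T[of s] by (simp add: P_def closure_of_subset openin_subset)
  have "cantor_scheme X (\<lambda>s. X closure_of T s)"
    unfolding cantor_scheme_def
  proof (intro allI conjI)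
    fix s
    show "closedin X (X closure_of T s)" by simp
    show "X closure_of T s \<noteq> {}" using P_T[of s] T_sub[of s] by (auto simp: P_def)
    show "X closure_of T (s @ [i]) \<subseteq> X closure_of T s" for i
      using child[OF P_T[of s]] T_sub[of s] by (auto simp: T_def splits_def)
    show "disjnt (X closure_of T (s @ [True])) (X closure_of T (s @ [False]))"
      using child[OF P_T[of s]] by (simp add: T_def splits_def)
  qed
  then show thesis by (rule that)
qed

lemma compact_space_decseq_closedin_eventually_subset:
  assumes X: "compact_space X" and C: "\<And>n. closedin X (C n)" "decseq C"
    and V: "openin X V" "(\<Inter>n. C n) \<subseteq> V"
  shows "\<forall>\<^sub>F n in sequentially. C n \<subseteq> V"
proof -
  have "\<exists>n. C n \<subseteq> V"
  proof (rule ccontr)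
    assume "\<nexists>n. C n \<subseteq> V"
    then have "(\<Inter>n. C n - V) \<noteq> {}"
    proof (intro compact_space_imp_nest[OF X])
      show "decseq (\<lambda>n. C n - V)"
        using \<open>decseq C\<close> by (auto simp: decseq_def)
    qed (use C V(1) in \<open>auto simp: closedin_diff\<close>)
    with V(2) show False by blast
  qed
  then obtain N where "C N \<subseteq> V" by blast
  then show ?thesis
    using \<open>decseq C\<close> by (intro eventually_sequentiallyI[of N]) (blast dest: decseqD)
qed

lemma cantor_scheme_decseq:
  "cantor_scheme X F \<Longrightarrow> decseq (\<lambda>k. F (map b [0..<k]))"
  by (rule decseq_SucI) (simp add: cantor_scheme_def)

lemma cantor_branch_subset: "cantor_branch F b \<subseteq> F (map b [0..<k])"
  by (auto simp: cantor_branch_def)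

lemma cantor_branch_nonempty:
  assumes "compact_space X" "cantor_scheme X F"
  shows "cantor_branch F b \<noteq> {}"
  unfolding cantor_branch_def
  using assms cantor_scheme_decseq[OF assms(2)]
  by (intro compact_space_imp_nest) (auto simp: cantor_scheme_def)

lemma cantor_branch_eventually_subset:
  assumes "compact_space X" "cantor_scheme X F" "openin X V" "cantor_branch F b \<subseteq> V"
  shows "\<forall>\<^sub>F k in sequentially. F (map b [0..<k]) \<subseteq> V"
  using assms cantor_scheme_decseq[OF assms(2)]
  by (intro compact_space_decseq_closedin_eventually_subset) (auto simp: cantor_scheme_def cantor_branch_def)

lemma cantor_branches_disjoint:
  assumes F: "cantor_scheme X F" and "b \<noteq> b'"
  shows "disjnt (cantor_branch F b) (cantor_branch F b')"
proof -
  define j where "j = (LEAST j. b j \<noteq> b' j)"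
  have bj: "b j \<noteq> b' j"
    unfolding j_def by (rule LeastI_ex) (use \<open>b \<noteq> b'\<close> in \<open>auto simp: fun_eq_iff\<close>)
  have "map b' [0..<j] = map b [0..<j]"
    by (rule map_cong) (auto simp: j_def dest: not_less_Least)
  then have "map b' [0..<Suc j] = map b [0..<j] @ [b' j]"
    by simp
  then have "cantor_branch F b' \<subseteq> F (map b [0..<j] @ [b' j])"
    using cantor_branch_subset[of F b' "Suc j"] by (simp only:)
  moreover have "cantor_branch F b \<subseteq> F (map b [0..<j] @ [b j])"
    using cantor_branch_subset[of F b "Suc j"] by simp
  moreover have "disjnt (F (map b [0..<j] @ [b j])) (F (map b [0..<j] @ [b' j]))"
    using F bj by (cases "b j") (auto simp: cantor_scheme_def disjnt_sym)
  ultimately show ?thesis by (meson disjnt_subset1 disjnt_subset2)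
qed

lemma exists_branch_through_extensions:
  fixes P :: "nat \<Rightarrow> 'a list \<Rightarrow> bool"
  assumes "\<And>s n. \<exists>s'. length s < length s' \<and> take (length s) s' = s \<and> P n s'"
  shows "\<exists>c. \<forall>n. \<exists>k. P n (map c [0..<k])"
proof -
  obtain ext where ext: "\<And>s n. length s < length (ext s n) \<and> take (length s) (ext s n) = s \<and> P n (ext s n)"
    using assms by metis
  define w where "w = rec_nat [] (\<lambda>n s. ext s n)"
  have w_Suc: "w (Suc n) = ext (w n) n" for n
    by (simp add: w_def)
  have length_w: "n \<le> length (w n)" for n
    by (induction n) (auto simp: w_Suc intro: Suc_leI order.strict_trans1 ext[THEN conjunct1])
  have w_prefix: "take (length (w m)) (w n) = w m" if "m \<le> n" for m n
    using that
  proof (induction n rule: dec_induct)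
    case (step n)
    have "length (w m) \<le> length (w n)"
      using arg_cong[OF step.IH, of length] by (simp add: min_def split: if_splits)
    then have "take (length (w m)) (w (Suc n)) = take (length (w m)) (take (length (w n)) (w (Suc n)))"
      by (simp add: min_absorb1)
    then show ?case using step.IH ext by (simp add: w_Suc)
  qed simp
  have w_nth: "w n ! i = w m ! i" if "m \<le> n" "i < length (w m)" for m n i
    using w_prefix[OF that(1)] nth_take[OF that(2), of "w n"] by simp
  define c where "c i = w (Suc i) ! i" for i
  have c_w: "map c [0..<length (w n)] = w n" for n
  proof (rule nth_equalityI)
    fix i assume "i < length (map c [0..<length (w n)])"
    then have i: "i < length (w n)" by simp
    have "w (Suc i) ! i = w (max n (Suc i)) ! i"
      using length_w[of "Suc i"] by (intro w_nth[symmetric]) auto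
    also have "\<dots> = w n ! i"
      using i by (intro w_nth) auto
    finally show "map c [0..<length (w n)] ! i = w n ! i"
      using i by (simp add: c_def)
  qed simp
  have "P n (map c [0..<length (w (Suc n))])" for n
    using ext[of "w n" n] c_w[of "Suc n"] by (simp only: w_Suc)
  then show ?thesis by blast
qed

definition cantor_tail_union :: "(bool list \<Rightarrow> 'a set) \<Rightarrow> nat \<Rightarrow> 'a set" where
  "cantor_tail_union F n = \<Union>{cantor_branch F b | b. finite {i. b i} \<and> (\<exists>m\<ge>n. b m)}"

lemma cantor_tail_union_subset_topspace:
  assumes "cantor_scheme X F"
  shows "cantor_tail_union F n \<subseteq> topspace X"
proof -
  have "cantor_branch F b \<subseteq> topspace X" for b
    using cantor_branch_subset[of F b 0] assms closedin_subset by (fastforce simp: cantor_scheme_def)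
  then show ?thesis by (auto simp: cantor_tail_union_def)
qed

lemma cantor_tail_union_Suc_subset: "cantor_tail_union F (Suc n) \<subseteq> cantor_tail_union F n"
  unfolding cantor_tail_union_def by (blast intro: Suc_leD)

lemma Inter_cantor_tail_union_empty:
  assumes F: "cantor_scheme X F"
  shows "(\<Inter>n. cantor_tail_union F n) = {}"
proof (rule equals0I)
  fix x assume x: "x \<in> (\<Inter>n. cantor_tail_union F n)"
  then obtain b where b: "finite {i. b i}" "x \<in> cantor_branch F b"
    by (auto simp: cantor_tail_union_def)
  then obtain N where N: "\<And>m. b m \<Longrightarrow> m < N"
    by (auto simp: finite_nat_set_iff_bounded)
  from x obtain b' m where "x \<in> cantor_branch F b'" "N \<le> m" "b' m"
    by (force simp: cantor_tail_union_def)
  with b(2) have "b' = b"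
    using cantor_branches_disjoint[OF F] by (meson disjnt_iff)
  with N \<open>N \<le> m\<close> \<open>b' m\<close> show False by fastforce
qed

lemma cantor_tail_union_extension:
  assumes X: "compact_space X" and F: "cantor_scheme X F"
    and V: "openin X V" "cantor_tail_union F n \<subseteq> V"
  shows "\<exists>s'. length s < length s' \<and> take (length s) s' = s \<and> F s' \<subseteq> V"
proof -
  define b where "b i \<longleftrightarrow> (if i < length s then s ! i else i = length s + n)" for i
  have "finite {i. b i}"
    by (rule finite_subset[of _ "{..length s + n}"]) (auto simp: b_def split: if_splits)
  moreover have "b (length s + n)" by (simp add: b_def)
  ultimately have "cantor_branch F b \<subseteq> cantor_tail_union F n"
    unfolding cantor_tail_union_def by (intro Union_upper) (blast intro: le_add2)
  with V(2) have "\<forall>\<^sub>F k in sequentially. F (map b [0..<k]) \<subseteq> V"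
    by (intro cantor_branch_eventually_subset[OF X F V(1)]) blast
  then have "\<forall>\<^sub>F k in sequentially. F (map b [0..<k]) \<subseteq> V \<and> length s < k"
    using eventually_gt_at_top by (rule eventually_conj)
  then obtain k where k: "F (map b [0..<k]) \<subseteq> V" "length s < k"
    using eventually_happens'[OF sequentially_bot] by blast
  have "take (length s) (map b [0..<k]) = map ((!) s) [0..<length s]"
    using k(2) by (simp add: take_map b_def)
  with k show ?thesis
    by (intro exI[of _ "map b [0..<k]"]) (simp add: map_nth)
qed

lemma compact_space_cantor_scheme_imp_not_delta_space:
  assumes X: "compact_space X" and F: "cantor_scheme X F"
  shows "\<not> delta_space X"
proof
  assume "delta_space X"
  moreover have "(\<forall>n. cantor_tail_union F n \<subseteq> topspace X) \<and>
      (\<forall>n. cantor_tail_union F (Suc n) \<subseteq> cantor_tail_union F n) \<and> (\<Inter>n. cantor_tail_union F n) = {}"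
    by (simp add: cantor_tail_union_subset_topspace[OF F] cantor_tail_union_Suc_subset
        Inter_cantor_tail_union_empty[OF F])
  ultimately have "\<exists>V. (\<forall>n. openin X (V n)) \<and> (\<forall>n. V (Suc n) \<subseteq> V n) \<and>
      (\<forall>n. cantor_tail_union F n \<subseteq> V n) \<and> (\<Inter>n. V n) = {}"
    unfolding delta_space_def by (rule mp[OF spec[where x = "cantor_tail_union F"]])
  then obtain V where V: "\<And>n. openin X (V n)" "\<And>n. cantor_tail_union F n \<subseteq> V n"
    "(\<Inter>n. V n) = {}"
    by blast
  have "\<exists>s'. length s < length s' \<and> take (length s) s' = s \<and> F s' \<subseteq> V n" for s n
    by (rule cantor_tail_union_extension[OF X F V(1,2)])
  then obtain c where c: "\<forall>n. \<exists>k. F (map c [0..<k]) \<subseteq> V n"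
    by (rule exists_branch_through_extensions[where P = "\<lambda>n s. F s \<subseteq> V n", THEN exE])
  have "cantor_branch F c \<subseteq> V n" for n
  proof -
    obtain k where "F (map c [0..<k]) \<subseteq> V n" using c by blast
    then show ?thesis using cantor_branch_subset[of F c k] by blast
  qed
  with V(3) cantor_branch_nonempty[OF X F] show False by blast
qed

theorem corollary3p15:
  fixes X :: "'a topology" and Y :: "'b topology" and e :: "'a \<Rightarrow> 'b"
  assumes "tychonoff_space X"
    and "\<not> scattered_space X"
    and "stone_cech_compactification X Y e"
  shows "\<not> delta_space Y"
proof -
  have Y: "compact_space Y" "Hausdorff_space Y" and "embedding_map X Y e"
    using assms(3) by (simp_all add: stone_cech_compactification_def)
  then have e: "homeomorphic_map X (subtopology Y (e ` topspace X)) e"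
    by (simp add: embedding_map_def)
  have e_cont: "continuous_map X Y e"
    using homeomorphic_imp_continuous_map[OF e] continuous_map_in_subtopology by blast
  obtain S where S: "S \<noteq> {}" "dense_in_itself X S"
    using assms(2) unfolding not_scattered_space_iff_dense_in_itself by blast
  have "e ` S \<noteq> {}" "dense_in_itself Y (e ` S)"
    using S e_cont homeomorphic_imp_injective_map[OF e]
    by (auto intro: dense_in_itself_continuous_injective_image)
  then obtain F where "cantor_scheme Y F"
    by (rule dense_in_itself_imp_cantor_scheme[OF compact_Hausdorff_imp_regular_space[OF Y] Y(2)])
  with Y(1) show ?thesis
    by (rule compact_space_cantor_scheme_imp_not_delta_space)
qed

end
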